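(* Let $X$ be a connected, finite, simple $3$-valent graph equipped with an orientation at each vertex, and let $k\in\mathbb{N}$. Then: (1) the Laplacian of $\mathrm{GC}_{2k,0}(X)$ has eigenvalue $4$ with multiplicity at least $\lceil k/2\rceil$; (2) the Laplacian of $\mathrm{GC}_{2k,0}(X)$ has eigenvalue $2$ with multiplicity at least $\lfloor k/2\rfloor$.
   Context: The Laplacian of a graph $Y$ acts on $f\in\mathbb{C}^{V(Y)}$ by $(\Delta_Y f)(p)=\deg(p)f(p)-\sum_{q\sim p}f(q)$. An orientation at each vertex is a cyclic ordering of the three edges at each vertex. Goldberg–Coxeter construction $\mathrm{GC}_{m,0}(X)$ for $m\geq1$: let $\omega=e^{\pi i/3}$ and $\mathbb{Z}[\omega]$ the triangular lattice. Let $T$ be the triangle with vertices $0,m,m\omega$. For each $p\in V(X)$ take a copy $\overline{\triangle}(p)$ of the graph whose vertices are the barycenters of the $m^2$ unit lattice triangles in $T$, adjacent when the triangles share an edge; the three sides of $T$ are matched with the three edges at $p$ so that the cyclic order at $p$ agrees with the counterclockwise order of the sides. For each edge $e=pq$, place $\overline{\triangle}(p)$ on $T$ with $e$ corresponding to the side from $m$ to $m\omega$ and $\overline{\triangle}(q)$ (preserving orientation) on the triangle with vertices $m,(1+\omega)m,\omega m$ with $e$ corresponding to the side from $\omega m$ to $m$, and identify all overlapping vertices and edges; the result is the $3$-valent graph $\mathrm{GC}_{m,0}(X)$. *)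

theory Defs
  imports Complex_Main "HOL-Library.Function_Algebras"
begin

definition simple_graph :: "'v set \<Rightarrow> ('v \<Rightarrow> 'v \<Rightarrow> bool) \<Rightarrow> bool" where
  "simple_graph V E \<longleftrightarrow> finite V \<and> (\<forall>p q. E p q \<longrightarrow> p \<in> V \<and> q \<in> V)
     \<and> (\<forall>p q. E p q \<longrightarrow> E q p) \<and> (\<forall>p. \<not> E p p)"

definition nbrs :: "'v set \<Rightarrow> ('v \<Rightarrow> 'v \<Rightarrow> bool) \<Rightarrow> 'v \<Rightarrow> 'v set" where
  "nbrs V E p = {q \<in> V. E p q}"

definition cubic :: "'v set \<Rightarrow> ('v \<Rightarrow> 'v \<Rightarrow> bool) \<Rightarrow> bool" where
  "cubic V E \<longleftrightarrow> (\<forall>p\<in>V. card (nbrs V E p) = 3)"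

definition connected_graph :: "'v set \<Rightarrow> ('v \<Rightarrow> 'v \<Rightarrow> bool) \<Rightarrow> bool" where
  "connected_graph V E \<longleftrightarrow> V \<noteq> {} \<and> (\<forall>p\<in>V. \<forall>q\<in>V. (p, q) \<in> {(x, y). E x y}\<^sup>*)"

text \<open>An orientation at each vertex of a 3-valent simple graph: a cyclic ordering of the
  three edges at p, i.e. (edges at p being in bijection with neighbours) a cyclic permutation
  \<open>\<sigma> p\<close> of the neighbour set of p, given by "next edge in the cyclic order".\<close>

definition orientation :: "'v set \<Rightarrow> ('v \<Rightarrow> 'v \<Rightarrow> bool) \<Rightarrow> ('v \<Rightarrow> 'v \<Rightarrow> 'v) \<Rightarrow> bool" where
  "orientation V E \<sigma> \<longleftrightarrow> (\<forall>p\<in>V. bij_betw (\<sigma> p) (nbrs V E p) (nbrs V E p)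
      \<and> (\<forall>q\<in>nbrs V E p. \<sigma> p q \<noteq> q \<and> \<sigma> p (\<sigma> p (\<sigma> p q)) = q))"

text \<open>A matching of the sides 0 (from 0 to m), 1 (from m to m\<omega>), 2 (from m\<omega> to 0) of T with
  the three edges (neighbours) at each vertex, such that the cyclic order at p agrees with
  the counterclockwise order of the sides.\<close>

definition side_matching ::
  "'v set \<Rightarrow> ('v \<Rightarrow> 'v \<Rightarrow> bool) \<Rightarrow> ('v \<Rightarrow> 'v \<Rightarrow> 'v) \<Rightarrow> ('v \<Rightarrow> nat \<Rightarrow> 'v) \<Rightarrow> bool" where
  "side_matching V E \<sigma> lab \<longleftrightarrow> (\<forall>p\<in>V. bij_betw (lab p) {0..<3} (nbrs V E p)
      \<and> (\<forall>i<3. \<sigma> p (lab p i) = lab p ((i + 1) mod 3)))"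

text \<open>Unit lattice triangles in T = conv{0, m, m\<omega>}, in lattice coordinates x + y\<omega>:
  \<open>Up a b\<close> has vertices (a,b),(a+1,b),(a,b+1)  (needs a+b < m);
  \<open>Dn a b\<close> has vertices (a+1,b),(a,b+1),(a+1,b+1) (needs a+b+1 < m).
  These are identified with their barycenters.\<close>

datatype tri = Up nat nat | Dn nat nat

definition tri_pos :: "nat \<Rightarrow> tri set" where
  "tri_pos m = {Up a b |a b. a + b < m} \<union> {Dn a b |a b. a + b + 1 < m}"

definition tri_adj :: "tri \<Rightarrow> tri \<Rightarrow> bool" where
  "tri_adj x y \<longleftrightarrow> (\<exists>a b. (x = Dn a b \<and> y \<in> {Up a b, Up (Suc a) b, Up a (Suc b)})
                        \<or> (y = Dn a b \<and> x \<in> {Up a b, Up (Suc a) b, Up a (Suc b)}))"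

text \<open>The t-th (t < m) unit triangle along side i of T, counted counterclockwise.\<close>

definition bdry :: "nat \<Rightarrow> nat \<Rightarrow> nat \<Rightarrow> tri" where
  "bdry m i t = (if i = 0 then Up t 0 else if i = 1 then Up (m - 1 - t) t else Up 0 (m - 1 - t))"

definition gc_verts :: "nat \<Rightarrow> 'v set \<Rightarrow> ('v \<times> tri) set" where
  "gc_verts m V = V \<times> tri_pos m"

text \<open>Adjacency of GC_{m,0}(X): edges inside each copy of the triangle graph, plus, for each
  edge pq of X matched with side i at p and side j at q, the edges created by gluing the two
  copies along that side (placing the copy of p on T with pq on the side m \<rightarrow> m\<omega>, and the
  copy of q, orientation preserved, on the triangle m, (1+\<omega>)m, \<omega>m); the t-th triangle along
  the side at p is then adjacent to the (m-1-t)-th triangle along the side at q.\<close>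

definition gc_adj :: "nat \<Rightarrow> ('v \<Rightarrow> 'v \<Rightarrow> bool) \<Rightarrow> ('v \<Rightarrow> nat \<Rightarrow> 'v)
    \<Rightarrow> ('v \<times> tri) \<Rightarrow> ('v \<times> tri) \<Rightarrow> bool" where
  "gc_adj m E lab u w \<longleftrightarrow>
     (fst u = fst w \<and> tri_adj (snd u) (snd w)) \<or>
     (\<exists>i j t. i < 3 \<and> j < 3 \<and> t < m \<and> E (fst u) (fst w) \<and>
        lab (fst u) i = fst w \<and> lab (fst w) j = fst u \<and>
        snd u = bdry m i t \<and> snd w = bdry m j (m - 1 - t))"

definition laplacian :: "'a set \<Rightarrow> ('a \<Rightarrow> 'a \<Rightarrow> bool) \<Rightarrow> ('a \<Rightarrow> complex) \<Rightarrow> 'a \<Rightarrow> complex" where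
  "laplacian W A f p = of_nat (card {q \<in> W. A p q}) * f p - (\<Sum>q\<in>{q \<in> W. A p q}. f q)"

text \<open>Functions in \<open>\<complex>^W\<close> are represented as functions vanishing outside W.\<close>

definition eigenspace :: "'a set \<Rightarrow> ('a \<Rightarrow> 'a \<Rightarrow> bool) \<Rightarrow> complex \<Rightarrow> ('a \<Rightarrow> complex) set" where
  "eigenspace W A \<mu> = {f. (\<forall>p. p \<notin> W \<longrightarrow> f p = 0) \<and> (\<forall>p\<in>W. laplacian W A f p = \<mu> * f p)}"

text \<open>Multiplicity of \<mu> as an eigenvalue of the Laplacian (a symmetric operator, so
  geometric = algebraic multiplicity): the complex dimension of the eigenspace.\<close>

definition eig_mult :: "'a set \<Rightarrow> ('a \<Rightarrow> 'a \<Rightarrow> bool) \<Rightarrow> complex \<Rightarrow> nat" where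
  "eig_mult W A \<mu> = vector_space.dim (\<lambda>c (f :: 'a \<Rightarrow> complex). (\<lambda>x. c * f x)) (eigenspace W A \<mu>)"

end

theory Submission
  imports Defs
begin

(* Fix an even m, a sign \<epsilon> = 1 or -1, and g : \<int> \<Rightarrow> \<complex> with g 0 = 0 and g (m - x) = \<epsilon> g x.
   In lattice coordinates, the explicit functions up_val and dn_val built from g satisfy the
   eigenvalue equation for 3 + \<epsilon> on the whole triangular lattice, take the same values along
   the three sides of T, and the reflection symmetry of g makes the value of each triangle just
   outside T equal to the value of the triangle glued there in GC_{m,0}(X).  So putting the same
   function on every copy of the triangle graph gives an eigenfunction of GC_{m,0}(X).
   For m = 2k the choices g = \<delta>_c + \<epsilon> \<delta>_(m-c), with 1 \<le> c \<le> k for \<epsilon> = 1 (eigenvalue 4)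
   and 1 \<le> c < k for \<epsilon> = -1 (eigenvalue 2), give k resp. k - 1 independent eigenfunctions:
   the functional f \<mapsto> f (Up 0 b) - (-1)^b f (Up (m-1-b) b) sends the one built from g to 2 g b.
   This is more than the bounds \<lceil>k/2\<rceil> and \<lfloor>k/2\<rfloor> claimed. *)

abbreviation (input) fscale :: "complex \<Rightarrow> ('a \<Rightarrow> complex) \<Rightarrow> 'a \<Rightarrow> complex" where
  "fscale \<equiv> \<lambda>c f x. c * f x"

lemma vector_space_fscale: "vector_space fscale"
  by unfold_locales (auto simp: fun_eq_iff algebra_simps)

lemma sum_fun_apply: "(\<Sum>v\<in>S. F v) x = (\<Sum>v\<in>S. F v x)" for F :: "'b \<Rightarrow> 'a \<Rightarrow> complex"
  by (induction S rule: infinite_finite_induct) auto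

lemma in_span_indicators:
  assumes "finite W" and "\<And>x. x \<notin> W \<Longrightarrow> f x = 0"
  shows "f \<in> module.span fscale ((\<lambda>w x. if x = w then 1 else 0) ` W)"
proof -
  interpret vector_space fscale by (rule vector_space_fscale)
  have "f = (\<Sum>w\<in>W. (\<lambda>x. f w * (if x = w then 1 else 0)))"
  proof
    fix x
    have "(\<Sum>w\<in>W. f w * (if x = w then 1 else 0)) = (if x \<in> W then f x else 0)"
      using \<open>finite W\<close> by (simp add: if_distrib[of "(*) _"] sum.delta cong: if_cong)
    then show "f x = (\<Sum>w\<in>W. (\<lambda>x. f w * (if x = w then 1 else 0))) x"
      using assms(2) by (auto simp: sum_fun_apply)
  qed
  also have "\<dots> \<in> span ((\<lambda>w x. if x = w then 1 else 0) ` W)"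
    by (intro span_sum span_scale span_base) auto
  finally show ?thesis .
qed

lemma card_le_eig_mult:
  assumes "finite W" and "B \<subseteq> eigenspace W A \<mu>" and "\<not> module.dependent fscale B"
  shows "card B \<le> eig_mult W A \<mu>"
proof -
  interpret vector_space fscale by (rule vector_space_fscale)
  let ?D = "(\<lambda>w x. if x = w then 1 else 0) ` W"
  have span_D: "eigenspace W A \<mu> \<subseteq> span ?D"
    using in_span_indicators[OF \<open>finite W\<close>] by (auto simp: eigenspace_def)
  obtain Bs where Bs: "Bs \<subseteq> eigenspace W A \<mu>" "independent Bs" "eigenspace W A \<mu> \<subseteq> span Bs"
     "card Bs = dim (eigenspace W A \<mu>)" by (rule basis_exists)
  have "finite Bs"
    using independent_span_bound[of ?D Bs] Bs(1,2) span_D \<open>finite W\<close> by auto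
  then have "card B \<le> card Bs"
    using independent_span_bound[of Bs B] assms(2,3) Bs(3) by auto
  then show ?thesis using Bs(4) by (simp add: eig_mult_def)
qed

lemma independent_if_diagonal:
  fixes F :: "'i \<Rightarrow> 'a \<Rightarrow> complex" and z z' :: "'i \<Rightarrow> 'a" and s :: "'i \<Rightarrow> complex"
  assumes diag: "\<And>b c. b \<in> C \<Longrightarrow> c \<in> C \<Longrightarrow> F c (z b) - s b * F c (z' b) \<noteq> 0 \<longleftrightarrow> b = c"
  shows "inj_on F C" and "\<not> module.dependent fscale (F ` C)"
proof -
  show "inj_on F C"
    by (rule inj_onI) (metis diag)
  interpret vector_space fscale by (rule vector_space_fscale)
  show "\<not> dependent (F ` C)"
  proof
    assume "dependent (F ` C)"
    then obtain T u v where T: "finite T" "T \<subseteq> F ` C" "(\<Sum>w\<in>T. (\<lambda>x. u w * w x)) = 0"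
      and v: "v \<in> T" "u v \<noteq> 0"
      by (auto simp: dependent_explicit)
    then obtain b where b: "b \<in> C" "v = F b" by auto
    let ?\<phi> = "\<lambda>w. w (z b) - s b * w (z' b)"
    have "(\<Sum>w\<in>T. u w * ?\<phi> w) = (\<Sum>w\<in>T. u w * w (z b)) - s b * (\<Sum>w\<in>T. u w * w (z' b))"
      by (simp add: right_diff_distrib sum_subtractf sum_distrib_left mult.left_commute)
    also have "\<dots> = 0"
      using fun_cong[OF T(3), of "z b"] fun_cong[OF T(3), of "z' b"] by (simp add: sum_fun_apply)
    finally have "(\<Sum>w\<in>T. u w * ?\<phi> w) = 0" .
    moreover have "?\<phi> w = 0" if w: "w \<in> T - {v}" for w
    proof -
      obtain c where "c \<in> C" "w = F c" using w T(2) by auto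
      with w b show ?thesis using diag[of b c] by auto
    qed
    ultimately have "u v * ?\<phi> v = 0"
      using T(1) v(1) by (simp add: sum.remove sum.neutral)
    then show False using v(2) b diag[of b b] by auto
  qed
qed

definition tri_nbrs :: "nat \<Rightarrow> tri \<Rightarrow> tri set" where
  "tri_nbrs m x = {y \<in> tri_pos m. tri_adj x y}"

definition sides_at :: "nat \<Rightarrow> tri \<Rightarrow> (nat \<times> nat) set" where
  "sides_at m x = {(i, t). i < 3 \<and> t < m \<and> bdry m i t = x}"

lemma finite_tri_pos: "finite (tri_pos m)"
proof -
  have "tri_pos m \<subseteq> (\<lambda>(a, b). Up a b) ` ({..<m} \<times> {..<m}) \<union> (\<lambda>(a, b). Dn a b) ` ({..<m} \<times> {..<m})"
    by (auto simp: tri_pos_def)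
  then show ?thesis by (rule finite_subset) auto
qed

lemma finite_sides_at: "finite (sides_at m x)"
  by (rule finite_subset[of _ "{..<3} \<times> {..<m}"]) (auto simp: sides_at_def)

lemma bdry_in_tri_pos: "i < 3 \<Longrightarrow> t < m \<Longrightarrow> bdry m i t \<in> tri_pos m"
  by (auto simp: bdry_def tri_pos_def)

lemma bdry_inj: "t < m \<Longrightarrow> t' < m \<Longrightarrow> bdry m i t = bdry m i t' \<Longrightarrow> t = t'"
  by (auto simp: bdry_def split: if_splits)

lemma tri_nbrs_Up:
  "a + b < m \<Longrightarrow> tri_nbrs m (Up a b) =
     (if a + b + 1 < m then {Dn a b} else {}) \<union> (if 0 < a then {Dn (a - 1) b} else {})
     \<union> (if 0 < b then {Dn a (b - 1)} else {})"
  by (auto simp: tri_nbrs_def tri_pos_def tri_adj_def)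

lemma tri_nbrs_Dn: "a + b + 1 < m \<Longrightarrow> tri_nbrs m (Dn a b) = {Up a b, Up (Suc a) b, Up a (Suc b)}"
  by (auto simp: tri_nbrs_def tri_pos_def tri_adj_def)

lemma sides_at_Up:
  "a + b < m \<Longrightarrow> sides_at m (Up a b) =
     (if b = 0 then {(0, a)} else {}) \<union> (if a + b + 1 = m then {(1, b)} else {})
     \<union> (if a = 0 then {(2, m - 1 - b)} else {})"
  by (auto simp: sides_at_def bdry_def split: if_splits)

lemma sides_at_Dn: "sides_at m (Dn a b) = {}"
  by (auto simp: sides_at_def bdry_def split: if_splits)

(* The Laplacian of GC_{m,0}(X) seen by a function that is the same on every copy of the
   triangle graph and along every side of T: the t-th triangle of a side is glued to the
   (m-1-t)-th triangle of the partner side. *)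
definition folded_laplacian :: "nat \<Rightarrow> (tri \<Rightarrow> complex) \<Rightarrow> tri \<Rightarrow> complex" where
  "folded_laplacian m h x =
     (\<Sum>y\<in>tri_nbrs m x. h x - h y) + (\<Sum>(i, t)\<in>sides_at m x. h x - h (bdry m 0 (m - 1 - t)))"

lemma folded_laplacian_Up:
  assumes "a + b < m"
  shows "folded_laplacian m h (Up a b) =
      (if a + b + 1 < m then h (Up a b) - h (Dn a b) else 0)
    + (if 0 < a then h (Up a b) - h (Dn (a - 1) b) else 0)
    + (if 0 < b then h (Up a b) - h (Dn a (b - 1)) else 0)
    + (if b = 0 then h (Up a b) - h (Up (m - 1 - a) 0) else 0)
    + (if a + b + 1 = m then h (Up a b) - h (Up (m - 1 - b) 0) else 0)
    + (if a = 0 then h (Up a b) - h (Up b 0) else 0)"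
  using assms unfolding folded_laplacian_def tri_nbrs_Up[OF assms] sides_at_Up[OF assms]
  by (cases "a + b + 1 < m"; cases "0 < a"; cases "0 < b") (auto simp: bdry_def intro!: arg_cong[where f = h])

lemma folded_laplacian_Dn:
  assumes "a + b + 1 < m"
  shows "folded_laplacian m h (Dn a b) =
    3 * h (Dn a b) - (h (Up a b) + h (Up (Suc a) b) + h (Up a (Suc b)))"
  unfolding folded_laplacian_def tri_nbrs_Dn[OF assms] sides_at_Dn by simp

definition lift :: "'v set \<Rightarrow> nat \<Rightarrow> (tri \<Rightarrow> complex) \<Rightarrow> 'v \<times> tri \<Rightarrow> complex" where
  "lift V m h w = (if fst w \<in> V \<and> snd w \<in> tri_pos m then h (snd w) else 0)"

locale side_labelled_graph =
  fixes V :: "'v set" and E :: "'v \<Rightarrow> 'v \<Rightarrow> bool" and lab :: "'v \<Rightarrow> nat \<Rightarrow> 'v"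
  assumes simple: "simple_graph V E"
    and lab_bij: "\<And>p. p \<in> V \<Longrightarrow> bij_betw (lab p) {0..<3} (nbrs V E p)"
begin

lemma finite_V: "finite V" and adj_in_V: "E p q \<Longrightarrow> p \<in> V \<and> q \<in> V"
  and adj_sym: "E p q \<Longrightarrow> E q p" and adj_irrefl: "\<not> E p p"
  using simple by (auto simp: simple_graph_def)

lemma lab_adj: "p \<in> V \<Longrightarrow> i < 3 \<Longrightarrow> E p (lab p i)"
  using lab_bij[of p] by (auto simp: bij_betw_def nbrs_def)

lemma lab_inj: "p \<in> V \<Longrightarrow> i < 3 \<Longrightarrow> j < 3 \<Longrightarrow> lab p i = lab p j \<Longrightarrow> i = j"
  using lab_bij[of p] by (auto simp: bij_betw_def inj_on_def)

lemma lab_surj: "E p q \<Longrightarrow> \<exists>i<3. lab p i = q"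
  using lab_bij[of p] adj_in_V[of p q] by (force simp: bij_betw_def nbrs_def)

definition partner_side :: "'v \<Rightarrow> 'v \<Rightarrow> nat" where
  "partner_side q p = (THE j. j < 3 \<and> lab q j = p)"

lemma partner_side_unique: "E p q \<Longrightarrow> j < 3 \<Longrightarrow> lab q j = p \<Longrightarrow> partner_side q p = j"
  unfolding partner_side_def using lab_inj adj_in_V by (intro the_equality) blast+

lemma partner_side: "E p q \<Longrightarrow> partner_side q p < 3 \<and> lab q (partner_side q p) = p"
  using lab_surj[OF adj_sym] partner_side_unique by blast

definition glued :: "nat \<Rightarrow> 'v \<Rightarrow> nat \<times> nat \<Rightarrow> 'v \<times> tri" where
  "glued m p = (\<lambda>(i, t). (lab p i, bdry m (partner_side (lab p i) p) (m - 1 - t)))"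

lemma gc_nbrs:
  assumes "p \<in> V" and "x \<in> tri_pos m"
  shows "{w \<in> gc_verts m V. gc_adj m E lab (p, x) w} = Pair p ` tri_nbrs m x \<union> glued m p ` sides_at m x"
proof (intro equalityI subsetI)
  fix w assume w: "w \<in> {w \<in> gc_verts m V. gc_adj m E lab (p, x) w}"
  obtain q y where [simp]: "w = (q, y)" by fastforce
  show "w \<in> Pair p ` tri_nbrs m x \<union> glued m p ` sides_at m x"
    using w unfolding gc_adj_def
  proof (elim CollectE conjE disjE exE)
    assume "fst (p, x) = fst w" "tri_adj (snd (p, x)) (snd w)" "w \<in> gc_verts m V"
    then show ?thesis by (auto simp: tri_nbrs_def gc_verts_def)
  next
    fix i j t assume "i < 3" "j < 3" "t < m" "E (fst (p, x)) (fst w)"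
      "lab (fst (p, x)) i = fst w" "lab (fst w) j = fst (p, x)"
      "snd (p, x) = bdry m i t" "snd w = bdry m j (m - 1 - t)"
    then have "w = glued m p (i, t)" and "(i, t) \<in> sides_at m x"
      using partner_side_unique by (auto simp: glued_def sides_at_def)
    then show ?thesis by blast
  qed
next
  fix w assume "w \<in> Pair p ` tri_nbrs m x \<union> glued m p ` sides_at m x"
  then consider y where "y \<in> tri_nbrs m x" "w = (p, y)"
    | i t where "(i, t) \<in> sides_at m x" "w = glued m p (i, t)" by auto
  then show "w \<in> {w \<in> gc_verts m V. gc_adj m E lab (p, x) w}"
  proof cases
    case 1
    then show ?thesis using \<open>p \<in> V\<close> by (auto simp: tri_nbrs_def gc_verts_def gc_adj_def)
  next
    case (2 i t)
    then have it: "i < 3" "t < m" "bdry m i t = x" by (auto simp: sides_at_def)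
    let ?q = "lab p i"
    have "E p ?q" using lab_adj \<open>p \<in> V\<close> it by blast
    note j = partner_side[OF this]
    have "w \<in> gc_verts m V"
      using 2(2) j adj_in_V[OF \<open>E p ?q\<close>] it by (auto simp: gc_verts_def glued_def bdry_in_tri_pos)
    moreover have "gc_adj m E lab (p, x) w"
      unfolding gc_adj_def using 2(2) j it \<open>E p ?q\<close>
      by (intro disjI2 exI[of _ i] exI[of _ "partner_side ?q p"] exI[of _ t]) (auto simp: glued_def)
    ultimately show ?thesis by blast
  qed
qed

lemma glued_other_copy: "p \<in> V \<Longrightarrow> it \<in> sides_at m x \<Longrightarrow> fst (glued m p it) \<noteq> p"
  using lab_adj adj_irrefl by (force simp: glued_def sides_at_def)

lemma inj_on_glued: "p \<in> V \<Longrightarrow> inj_on (glued m p) (sides_at m x)"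
  by (rule inj_onI) (auto simp: glued_def sides_at_def dest: lab_inj bdry_inj)

lemma laplacian_lift:
  assumes bdry_sym: "\<And>i t. i < 3 \<Longrightarrow> t < m \<Longrightarrow> h (bdry m i t) = h (bdry m 0 t)"
    and "p \<in> V" and "x \<in> tri_pos m"
  shows "laplacian (gc_verts m V) (gc_adj m E lab) (lift V m h) (p, x) = folded_laplacian m h x"
proof -
  let ?f = "lift V m h"
  have "fst w \<noteq> p" if "w \<in> glued m p ` sides_at m x" for w
    using that glued_other_copy[OF \<open>p \<in> V\<close>] by auto
  then have disj: "Pair p ` tri_nbrs m x \<inter> glued m p ` sides_at m x = {}"
    by fastforce
  have fin: "finite (tri_nbrs m x)"
    using finite_tri_pos by (simp add: tri_nbrs_def)
  have "laplacian (gc_verts m V) (gc_adj m E lab) ?f (p, x)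
      = (\<Sum>w\<in>{w \<in> gc_verts m V. gc_adj m E lab (p, x) w}. ?f (p, x) - ?f w)"
    by (simp add: laplacian_def sum_subtractf)
  also have "\<dots> = (\<Sum>w\<in>Pair p ` tri_nbrs m x. ?f (p, x) - ?f w)
      + (\<Sum>w\<in>glued m p ` sides_at m x. ?f (p, x) - ?f w)"
    unfolding gc_nbrs[OF assms(2,3)] using fin finite_sides_at disj by (simp add: sum.union_disjoint)
  also have "(\<Sum>w\<in>Pair p ` tri_nbrs m x. ?f (p, x) - ?f w) = (\<Sum>y\<in>tri_nbrs m x. h x - h y)"
    using assms(2,3) by (subst sum.reindex) (auto simp: inj_on_def lift_def tri_nbrs_def)
  also have "(\<Sum>w\<in>glued m p ` sides_at m x. ?f (p, x) - ?f w)
      = (\<Sum>(i, t)\<in>sides_at m x. h x - h (bdry m 0 (m - 1 - t)))"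
  proof (rule sum.reindex_cong[OF inj_on_glued[OF \<open>p \<in> V\<close>] refl])
    fix it assume "it \<in> sides_at m x"
    then obtain i t where [simp]: "it = (i, t)" and it: "i < 3" "t < m"
      by (auto simp: sides_at_def)
    have "E p (lab p i)" using lab_adj \<open>p \<in> V\<close> it by blast
    note j = partner_side[OF this]
    have "?f (glued m p (i, t)) = h (bdry m 0 (m - 1 - t))"
      using j it adj_in_V[OF \<open>E p (lab p i)\<close>] bdry_sym[of "partner_side (lab p i) p" "m - 1 - t"]
      by (simp add: glued_def lift_def bdry_in_tri_pos)
    then show "?f (p, x) - ?f (glued m p it) = (case it of (i, t) \<Rightarrow> h x - h (bdry m 0 (m - 1 - t)))"
      using assms(2,3) by (simp add: lift_def)
  qed
  finally show ?thesis by (simp add: folded_laplacian_def)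
qed

lemma lift_in_eigenspace:
  assumes "\<And>i t. i < 3 \<Longrightarrow> t < m \<Longrightarrow> h (bdry m i t) = h (bdry m 0 t)"
    and "\<And>x. x \<in> tri_pos m \<Longrightarrow> folded_laplacian m h x = \<mu> * h x"
  shows "lift V m h \<in> eigenspace (gc_verts m V) (gc_adj m E lab) \<mu>"
  unfolding eigenspace_def
proof (intro CollectI conjI allI impI ballI)
  fix w assume "w \<notin> gc_verts m V"
  then show "lift V m h w = 0" by (cases w) (auto simp: lift_def gc_verts_def)
next
  fix w assume "w \<in> gc_verts m V"
  then obtain p x where w: "w = (p, x)" "p \<in> V" "x \<in> tri_pos m" by (auto simp: gc_verts_def)
  have "laplacian (gc_verts m V) (gc_adj m E lab) (lift V m h) (p, x) = folded_laplacian m h x"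
    using laplacian_lift[of m h] assms(1) w by blast
  also have "\<dots> = \<mu> * lift V m h (p, x)"
    using assms(2) w by (simp add: lift_def)
  finally show "laplacian (gc_verts m V) (gc_adj m E lab) (lift V m h) w = \<mu> * lift V m h w"
    using w(1) by simp
qed

end

definition alt :: "int \<Rightarrow> complex" where
  "alt n = (if even n then 1 else -1)"

lemma alt_0 [simp]: "alt 0 = 1" and alt_1 [simp]: "alt 1 = -1"
  by (simp_all add: alt_def)

lemma alt_add [simp]: "alt (a + b) = alt a * alt b"
  and alt_diff [simp]: "alt (a - b) = alt a * alt b"
  by (auto simp: alt_def)

lemma alt_uminus [simp]: "alt (- a) = alt a"
  by (simp add: alt_def)

lemma alt_mult_self [simp]: "alt a * alt a = 1"
  by (simp add: alt_def)

lemma alt_even: "even n \<Longrightarrow> alt n = 1"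
  by (simp add: alt_def)

(* Integer coordinates, so that the formulas also make sense for the triangles just outside T. *)
definition up_val :: "nat \<Rightarrow> (int \<Rightarrow> complex) \<Rightarrow> int \<Rightarrow> int \<Rightarrow> complex" where
  "up_val m g a b = g b * alt a + g (int m - 1 - a - b) * alt b - g a * alt (a + b)"

definition dn_val :: "nat \<Rightarrow> complex \<Rightarrow> (int \<Rightarrow> complex) \<Rightarrow> int \<Rightarrow> int \<Rightarrow> complex" where
  "dn_val m \<epsilon> g a b = - \<epsilon> * (g (b + 1) * alt a + g (int m - 1 - a - b) * alt b + g (a + 1) * alt (a + b))"

fun tri_fun :: "nat \<Rightarrow> complex \<Rightarrow> (int \<Rightarrow> complex) \<Rightarrow> tri \<Rightarrow> complex" where
  "tri_fun m \<epsilon> g (Up a b) = up_val m g (int a) (int b)"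
| "tri_fun m \<epsilon> g (Dn a b) = dn_val m \<epsilon> g (int a) (int b)"

(* For \<epsilon>\<^sup>2 = 1 these two identities say that up_val and dn_val form an eigenfunction
   of the infinite triangular lattice for the eigenvalue 3 + \<epsilon>, whatever g is. *)
lemma dn_val_around_up:
  "dn_val m \<epsilon> g a b + dn_val m \<epsilon> g (a - 1) b + dn_val m \<epsilon> g a (b - 1) = - \<epsilon> * up_val m g a b"
  by (simp add: up_val_def dn_val_def algebra_simps)

lemma up_val_around_dn:
  "- \<epsilon> * (up_val m g a b + up_val m g (a + 1) b + up_val m g a (b + 1)) = dn_val m \<epsilon> g a b"
  by (simp add: up_val_def dn_val_def algebra_simps)

locale reflected_profile =
  fixes m :: nat and \<epsilon> :: complex and g :: "int \<Rightarrow> complex"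
  assumes even_m: "even m" and eps_sq: "\<epsilon> * \<epsilon> = 1"
    and g_0: "g 0 = 0" and g_reflect: "\<And>x. g (int m - x) = \<epsilon> * g x"
begin

lemma alt_m [simp]: "alt (int m) = 1"
  using even_m by (simp add: alt_even)

lemma eps_eps [simp]: "\<epsilon> * (\<epsilon> * z) = z"
  using eps_sq by (simp add: mult.assoc[symmetric])

(* The Dn triangle just outside side i of T has the same value as the triangle glued to side i. *)
lemma dn_val_ghost_0: "dn_val m \<epsilon> g a (- 1) = up_val m g (int m - 1 - a) 0"
  using g_reflect[of a] g_reflect[of "a + 1"]
  by (simp add: up_val_def dn_val_def g_0 algebra_simps)

lemma dn_val_ghost_1: "dn_val m \<epsilon> g (int m - 1 - b) b = up_val m g (int m - 1 - b) 0"
  using g_reflect[of b] g_reflect[of "b + 1"]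
  by (simp add: up_val_def dn_val_def g_0 algebra_simps)

lemma dn_val_ghost_2: "dn_val m \<epsilon> g (- 1) b = up_val m g b 0"
  using g_reflect[of b] g_reflect[of "b + 1"]
  by (simp add: up_val_def dn_val_def g_0 algebra_simps)

lemma tri_fun_bdry:
  assumes "i < 3" and "t < m"
  shows "tri_fun m \<epsilon> g (bdry m i t) = tri_fun m \<epsilon> g (bdry m 0 t)"
  using assms by (auto simp: bdry_def up_val_def g_0 algebra_simps numeral_3_eq_3 less_Suc_eq)

lemma up_val_detect: "up_val m g 0 b - alt b * up_val m g (int m - 1 - b) b = 2 * g b"
  by (simp add: up_val_def g_0 algebra_simps)

lemma folded_laplacian_tri_fun_Up:
  assumes "a + b < m"
  shows "folded_laplacian m (tri_fun m \<epsilon> g) (Up a b) = (3 + \<epsilon>) * tri_fun m \<epsilon> g (Up a b)"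
proof -
  let ?h = "tri_fun m \<epsilon> g" and ?U = "up_val m g (int a) (int b)" and ?D = "dn_val m \<epsilon> g"
  have side_1: "(if a + b + 1 < m then ?U - ?h (Dn a b) else 0)
      + (if a + b + 1 = m then ?U - ?h (Up (m - 1 - b) 0) else 0) = ?U - ?D (int a) (int b)"
    using assms dn_val_ghost_1[of b] by (auto simp: of_nat_diff)
  have side_2: "(if 0 < a then ?U - ?h (Dn (a - 1) b) else 0)
      + (if a = 0 then ?U - ?h (Up b 0) else 0) = ?U - ?D (int a - 1) (int b)"
    using dn_val_ghost_2[of b] by (auto simp: of_nat_diff)
  have side_0: "(if 0 < b then ?U - ?h (Dn a (b - 1)) else 0)
      + (if b = 0 then ?U - ?h (Up (m - 1 - a) 0) else 0) = ?U - ?D (int a) (int b - 1)"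
    using assms dn_val_ghost_0[of a] by (auto simp: of_nat_diff diff_diff_eq)
  have "folded_laplacian m ?h (Up a b) = (?U - ?D (int a) (int b))
      + (?U - ?D (int a - 1) (int b)) + (?U - ?D (int a) (int b - 1))"
    unfolding folded_laplacian_Up[OF assms] side_1[symmetric] side_2[symmetric] side_0[symmetric]
    by (simp only: tri_fun.simps ac_simps)
  also have "\<dots> = (3 + \<epsilon>) * ?U"
    using dn_val_around_up[of m \<epsilon> g "int a" "int b"] by (simp add: algebra_simps)
  finally show ?thesis by simp
qed

lemma folded_laplacian_tri_fun_Dn:
  assumes "a + b + 1 < m"
  shows "folded_laplacian m (tri_fun m \<epsilon> g) (Dn a b) = (3 + \<epsilon>) * tri_fun m \<epsilon> g (Dn a b)"
proof -
  let ?U = "up_val m g" and ?D = "dn_val m \<epsilon> g (int a) (int b)"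
  have "?U (int a) (int b) + ?U (int a + 1) (int b) + ?U (int a) (int b + 1) = - \<epsilon> * ?D"
    unfolding up_val_around_dn[symmetric] by simp
  then show ?thesis
    unfolding folded_laplacian_Dn[OF assms] by (simp add: algebra_simps)
qed

lemma folded_laplacian_tri_fun:
  "x \<in> tri_pos m \<Longrightarrow> folded_laplacian m (tri_fun m \<epsilon> g) x = (3 + \<epsilon>) * tri_fun m \<epsilon> g x"
  by (auto simp: tri_pos_def folded_laplacian_tri_fun_Up folded_laplacian_tri_fun_Dn)

end

lemma (in side_labelled_graph) lift_tri_fun_in_eigenspace:
  assumes "reflected_profile m \<epsilon> g"
  shows "lift V m (tri_fun m \<epsilon> g) \<in> eigenspace (gc_verts m V) (gc_adj m E lab) (3 + \<epsilon>)"
  using reflected_profile.tri_fun_bdry[OF assms] reflected_profile.folded_laplacian_tri_fun[OF assms]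
  by (rule lift_in_eigenspace)

definition bump :: "nat \<Rightarrow> complex \<Rightarrow> nat \<Rightarrow> int \<Rightarrow> complex" where
  "bump m \<epsilon> c x = (if x = int c then 1 else 0) + \<epsilon> * (if x = int m - int c then 1 else 0)"

lemma reflected_profile_bump:
  assumes "even m" and "\<epsilon> * \<epsilon> = 1" and "0 < c" and "c < m"
  shows "reflected_profile m \<epsilon> (bump m \<epsilon> c)"
  using assms by unfold_locales (auto simp: bump_def algebra_simps)

lemma (in side_labelled_graph) card_le_eig_mult_gc:
  assumes "V \<noteq> {}" and "even m" and "\<epsilon> * \<epsilon> = 1" and "C \<subseteq> {0<..<m}"
    and diag: "\<And>b c. b \<in> C \<Longrightarrow> c \<in> C \<Longrightarrow> bump m \<epsilon> c (int b) \<noteq> 0 \<longleftrightarrow> b = c"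
  shows "card C \<le> eig_mult (gc_verts m V) (gc_adj m E lab) (3 + \<epsilon>)"
proof -
  obtain p0 where "p0 \<in> V" using assms(1) by blast
  define F where "F c = lift V m (tri_fun m \<epsilon> (bump m \<epsilon> c))" for c
  have profile: "reflected_profile m \<epsilon> (bump m \<epsilon> c)" if "c \<in> C" for c
    using that assms(2-4) by (intro reflected_profile_bump) auto
  have "F c (p0, Up 0 b) - alt (int b) * F c (p0, Up (m - 1 - b) b) = 2 * bump m \<epsilon> c (int b)"
    if "b \<in> C" and "c \<in> C" for b c
    using reflected_profile.up_val_detect[OF profile[OF \<open>c \<in> C\<close>], of "int b"] that assms(4) \<open>p0 \<in> V\<close>
    by (auto simp: F_def lift_def tri_pos_def of_nat_diff diff_diff_eq)
  then have "inj_on F C" and indep: "\<not> module.dependent fscale (F ` C)"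
    using independent_if_diagonal[of C F "\<lambda>b. (p0, Up 0 b)" "\<lambda>b. alt (int b)" "\<lambda>b. (p0, Up (m - 1 - b) b)"]
      diag by auto
  have "F ` C \<subseteq> eigenspace (gc_verts m V) (gc_adj m E lab) (3 + \<epsilon>)"
    using lift_tri_fun_in_eigenspace[OF profile] by (auto simp: F_def)
  then have "card (F ` C) \<le> eig_mult (gc_verts m V) (gc_adj m E lab) (3 + \<epsilon>)"
    using card_le_eig_mult[OF _ _ indep] finite_V finite_tri_pos by (simp add: gc_verts_def)
  with \<open>inj_on F C\<close> show ?thesis by (simp add: card_image)
qed

lemma (in side_labelled_graph) eig_mult_gc_4:
  assumes "V \<noteq> {}"
  shows "k \<le> eig_mult (gc_verts (2 * k) V) (gc_adj (2 * k) E lab) 4"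
proof -
  have "card {1..k} \<le> eig_mult (gc_verts (2 * k) V) (gc_adj (2 * k) E lab) (3 + 1)"
    by (rule card_le_eig_mult_gc[OF assms]) (auto simp: bump_def)
  then show ?thesis by simp
qed

lemma (in side_labelled_graph) eig_mult_gc_2:
  assumes "V \<noteq> {}"
  shows "k - 1 \<le> eig_mult (gc_verts (2 * k) V) (gc_adj (2 * k) E lab) 2"
proof -
  have "card {1..k - 1} \<le> eig_mult (gc_verts (2 * k) V) (gc_adj (2 * k) E lab) (3 + - 1)"
    by (rule card_le_eig_mult_gc[OF assms]) (auto simp: bump_def)
  then show ?thesis by simp
qed

theorem theorem1p4:
  fixes V :: "'v set" and E :: "'v \<Rightarrow> 'v \<Rightarrow> bool"
    and \<sigma> :: "'v \<Rightarrow> 'v \<Rightarrow> 'v" and lab :: "'v \<Rightarrow> nat \<Rightarrow> 'v" and k :: nat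
  assumes "simple_graph V E" and "connected_graph V E" and "cubic V E"
    and "orientation V E \<sigma>" and "side_matching V E \<sigma> lab"
    and "k \<ge> 1"
  shows "eig_mult (gc_verts (2 * k) V) (gc_adj (2 * k) E lab) 4 \<ge> nat \<lceil>real k / 2\<rceil>
     \<and> eig_mult (gc_verts (2 * k) V) (gc_adj (2 * k) E lab) 2 \<ge> nat \<lfloor>real k / 2\<rfloor>"
proof -
  interpret side_labelled_graph V E lab
    using assms(1,5) by unfold_locales (auto simp: side_matching_def)
  have "V \<noteq> {}" using assms(2) by (simp add: connected_graph_def)
  moreover have "nat \<lceil>real k / 2\<rceil> \<le> k" and "nat \<lfloor>real k / 2\<rfloor> \<le> k - 1"
    by linarith+
  ultimately show ?thesis
    using eig_mult_gc_4 eig_mult_gc_2 order_trans by blast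
qed

end
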